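(* Let $P$ be a priority forest on $[n]_0$ with $m$ edges, and let $I_P=[\hat0,P]$ be its principal ideal in $\Pi(n)$. Then $$\chi(I_P,q)=q^{m-\mathrm{sasc}(P)}(q-1)^{\mathrm{sasc}(P)}=q^{m-\mathrm{lucky}(\pi)}(q-1)^{\mathrm{lucky}(\pi)},$$ where $\pi$ is any $(m,n)$-parking function whose priority forest is $P$.
   Context: $[n]_0=\{0,\dots,n\}$, $[n]=\{1,\dots,n\}$. A priority forest on $[n]_0$ is a rooted forest with vertex set $[n]_0$ whose component trees $T_0,T_1,\dots$ are increasing (each non-root vertex has a larger label than its parent) and satisfy: for $j<k$ every label of $T_j$ is smaller than every label of $T_k$. $\Pi(n)$ is the poset of priority forests on $[n]_0$ ordered by inclusion of edge sets, together with an extra top element $\hat1$; $\hat0$ is the edgeless forest; the rank of a priority forest is its number of edges. For the interval $I_P=[\hat0,P]$ with $\rho(x)=|E(x)|$, its characteristic polynomial is $\chi(I_P,q)=\sum_{x\in I_P}\mu(\hat0,x)\,q^{\rho(P)-\rho(x)}$, where $\mu$ is the Möbius function. A small ascent of $P$ is a non-root vertex $i$ whose parent is $i-1$; $\mathrm{sasc}(P)$ is their number. An $(m,n)$-parking function is a map $\pi:[m]\to[n]$ such that when cars $1,\dots,m$ arrive in order to spots $1,\dots,n$ and car $i$ parks in the first empty spot $\ge\pi(i)$, all cars park. Its bird's eye permutation $\omega_\pi$ is the partial map sending each occupied spot to the car parked there. Its priority forest is the forest on $[n]_0$ in which an occupied spot $i$ is a non-root vertex with parent $\pi(\omega_\pi(i))-1$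 and an empty spot (and $0$) is a root; this is a priority forest with $m$ edges. A car is lucky if it parks at its preferred spot $\pi(i)$; $\mathrm{lucky}(\pi)$ is the number of lucky cars. *)

theory Defs
  imports "HOL-Computational_Algebra.Polynomial"
begin

definition connected_in :: "(nat \<times> nat) set \<Rightarrow> nat \<Rightarrow> nat \<Rightarrow> bool" where
  "connected_in E x y \<longleftrightarrow> (x, y) \<in> (E \<union> E\<inverse>)\<^sup>*"

definition priority_forest :: "nat \<Rightarrow> (nat \<times> nat) set \<Rightarrow> bool" where
  "priority_forest n E \<longleftrightarrow>
     E \<subseteq> {0..n} \<times> {0..n}
   \<and> (\<forall>p c. (p, c) \<in> E \<longrightarrow> p < c)
   \<and> (\<forall>p p' c. (p, c) \<in> E \<and> (p', c) \<in> E \<longrightarrow> p = p')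
   \<and> (\<forall>a b c d. a \<in> {0..n} \<and> b \<in> {0..n} \<and> c \<in> {0..n} \<and> d \<in> {0..n} \<and>
        connected_in E a c \<and> connected_in E b d \<and> \<not> connected_in E a b \<and> a < b \<longrightarrow> c < d)"

text \<open>Principal ideal [0, P] of Pi(n) (it does not contain the extra top element).\<close>
definition ideal_PF :: "nat \<Rightarrow> (nat \<times> nat) set \<Rightarrow> (nat \<times> nat) set set" where
  "ideal_PF n E = {Q. priority_forest n Q \<and> Q \<subseteq> E}"

function mobius :: "'a set set \<Rightarrow> 'a set \<Rightarrow> 'a set \<Rightarrow> int" where
  "mobius F b x =
     (if x = b then 1
      else if infinite x \<or> \<not> b \<subseteq> x then 0
      else - (\<Sum>z\<in>{z \<in> F. b \<subseteq> z \<and> z \<subset> x}. mobius F b z))"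
  by auto
termination
  by (relation "measure (\<lambda>(F, b, x). card x)") (auto intro: psubset_card_mono)

definition char_poly_PF :: "nat \<Rightarrow> (nat \<times> nat) set \<Rightarrow> int poly" where
  "char_poly_PF n E =
     (\<Sum>Q\<in>ideal_PF n E. smult (mobius (ideal_PF n E) {} Q) (monom 1 (card E - card Q)))"

definition sasc :: "nat \<Rightarrow> (nat \<times> nat) set \<Rightarrow> nat" where
  "sasc n E = card {i \<in> {1..n}. (i - 1, i) \<in> E}"

fun occ :: "(nat \<Rightarrow> nat) \<Rightarrow> nat \<Rightarrow> nat set" where
  "occ \<pi> 0 = {}"
| "occ \<pi> (Suc k) = insert (LEAST s. \<pi> (Suc k) \<le> s \<and> s \<notin> occ \<pi> k) (occ \<pi> k)"

definition spot :: "(nat \<Rightarrow> nat) \<Rightarrow> nat \<Rightarrow> nat" where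
  "spot \<pi> i = (LEAST s. \<pi> i \<le> s \<and> s \<notin> occ \<pi> (i - 1))"

definition parking_function :: "nat \<Rightarrow> nat \<Rightarrow> (nat \<Rightarrow> nat) \<Rightarrow> bool" where
  "parking_function m n \<pi> \<longleftrightarrow> (\<forall>i \<in> {1..m}. \<pi> i \<in> {1..n} \<and> spot \<pi> i \<le> n)"

definition birds_eye :: "nat \<Rightarrow> (nat \<Rightarrow> nat) \<Rightarrow> nat \<Rightarrow> nat" where
  "birds_eye m \<pi> s = (THE i. i \<in> {1..m} \<and> spot \<pi> i = s)"

definition pf_forest :: "nat \<Rightarrow> (nat \<Rightarrow> nat) \<Rightarrow> (nat \<times> nat) set" where
  "pf_forest m \<pi> = {(\<pi> (birds_eye m \<pi> s) - 1, s) | s. s \<in> spot \<pi> ` {1..m}}"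

definition lucky :: "nat \<Rightarrow> (nat \<Rightarrow> nat) \<Rightarrow> nat" where
  "lucky m \<pi> = card {i \<in> {1..m}. spot \<pi> i = \<pi> i}"

end

theory Submission
  imports Defs
begin

text \<open>The small ascents of \<open>P\<close>, i.e. its edges \<open>(i - 1, i)\<close>, behave like the atoms of a
  Boolean lattice. Every set of small ascents is itself a priority forest, and every nonempty
  priority forest contains a small ascent: if its smallest non-root vertex \<open>c\<close> had a parent
  \<open>p < c - 1\<close>, then \<open>p\<close> and \<open>c - 1\<close> would be roots of different trees and the tree of \<open>p\<close>
  would contain \<open>c > c - 1\<close>. By induction over the interval, \<open>\<mu>(0, Q) = (-1)^|Q|\<close> if \<open>Q\<close>
  consists of small ascents and \<open>\<mu>(0, Q) = 0\<close> otherwise, so \<open>\<chi>(I_P, q)\<close> is the sum of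
  \<open>(-1)^|Q| q^(m - |Q|)\<close> over all sets \<open>Q\<close> of small ascents, which is
  \<open>q^(m - sasc P) (q - 1)^(sasc P)\<close>. For a parking function the edge into spot \<open>s\<close> comes
  from \<open>\<pi> i - 1\<close> for the car \<open>i\<close> parked there, so it is a small ascent exactly when car \<open>i\<close>
  is lucky.\<close>

declare mobius.simps[simp del]

definition increasing_forest :: "(nat \<times> nat) set \<Rightarrow> bool" where
  "increasing_forest E \<longleftrightarrow>
     (\<forall>p c. (p, c) \<in> E \<longrightarrow> p < c) \<and> (\<forall>p p' c. (p, c) \<in> E \<and> (p', c) \<in> E \<longrightarrow> p = p')"

lemma increasing_forest_if_priority_forest: "priority_forest n E \<Longrightarrow> increasing_forest E"
  unfolding priority_forest_def increasing_forest_def by blast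

lemma finite_if_priority_forest: "priority_forest n E \<Longrightarrow> finite E"
  unfolding priority_forest_def by (meson finite_SigmaI finite_atLeastAtMost finite_subset)

definition root_of :: "(nat \<times> nat) set \<Rightarrow> nat \<Rightarrow> nat" where
  "root_of E v = (LEAST r. (r, v) \<in> E\<^sup>*)"

lemma root_of_parentless:
  assumes "\<nexists>p. (p, v) \<in> E"
  shows "root_of E v = v"
  unfolding root_of_def
proof (rule Least_equality)
  fix r assume "(r, v) \<in> E\<^sup>*"
  then show "v \<le> r" by (rule rtranclE) (use assms in auto)
qed simp

lemma root_of_edge:
  assumes E: "increasing_forest E" and uv: "(u, v) \<in> E"
  shows "root_of E v = root_of E u"
proof -
  have unique_parent: "\<forall>p p' c. (p, c) \<in> E \<and> (p', c) \<in> E \<longrightarrow> p = p'" and "u < v"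
    using E uv by (auto simp: increasing_forest_def)
  have ancestors: "r = v \<or> (r, u) \<in> E\<^sup>*" if "(r, v) \<in> E\<^sup>*" for r
    using that by (rule rtranclE) (use unique_parent uv in blast)+
  let ?l = "LEAST r. (r, u) \<in> E\<^sup>*"
  have "(?l, u) \<in> E\<^sup>*" by (rule LeastI[of _ u]) simp
  have "(LEAST r. (r, v) \<in> E\<^sup>*) = ?l"
  proof (rule Least_equality)
    show "(?l, v) \<in> E\<^sup>*" using \<open>(?l, u) \<in> E\<^sup>*\<close> uv by (rule rtrancl_into_rtrancl)
    fix r assume "(r, v) \<in> E\<^sup>*"
    then show "?l \<le> r"
      using ancestors Least_le[of "\<lambda>r. (r, u) \<in> E\<^sup>*"] \<open>u < v\<close> by fastforce
  qed
  then show ?thesis by (simp add: root_of_def)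
qed

lemma root_of_connected:
  assumes E: "increasing_forest E" and "connected_in E a b"
  shows "root_of E a = root_of E b"
  using assms(2) unfolding connected_in_def
proof (induction rule: rtrancl_induct)
  case (step y z)
  then show ?case using root_of_edge[OF E] by auto
qed simp

lemma parentless_not_connected:
  assumes "increasing_forest E" "\<nexists>p. (p, a) \<in> E" "\<nexists>p. (p, b) \<in> E" "a \<noteq> b"
  shows "\<not> connected_in E a b"
  using assms root_of_connected root_of_parentless by metis

definition small_ascents :: "(nat \<times> nat) set \<Rightarrow> (nat \<times> nat) set" where
  "small_ascents E = {e \<in> E. snd e = Suc (fst e)}"

lemma card_small_ascents:
  assumes "E \<subseteq> {0..n} \<times> {0..n}"
  shows "card (small_ascents E) = sasc n E"
proof -
  have "small_ascents E = (\<lambda>i. (i - 1, i)) ` {i \<in> {1..n}. (i - 1, i) \<in> E}"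
    using assms by (force simp: small_ascents_def image_iff)
  moreover have "inj (\<lambda>i. (i - 1, i::nat))" by (rule injI) simp
  ultimately show ?thesis
    unfolding sasc_def by (simp add: card_image inj_on_subset)
qed

lemma priority_forest_has_small_ascent:
  assumes pf: "priority_forest n E" and "E \<noteq> {}"
  shows "small_ascents E \<noteq> {}"
proof -
  have incr: "increasing_forest E" using pf by (rule increasing_forest_if_priority_forest)
  define c where "c = Min (snd ` E)"
  have "c \<in> snd ` E" unfolding c_def
    using finite_if_priority_forest[OF pf] \<open>E \<noteq> {}\<close> by (intro Min_in) auto
  then obtain p where pc: "(p, c) \<in> E" by force
  have below_c_parentless: "\<nexists>q. (q, v) \<in> E" if "v < c" for v
    using that Min_le[OF finite_imageI[OF finite_if_priority_forest[OF pf]], of _ snd]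
    unfolding c_def by force
  have "p < c" using incr pc by (auto simp: increasing_forest_def)
  have "c \<le> n" using pf pc by (auto simp: priority_forest_def)
  have priority: "\<forall>a b c d. a \<in> {0..n} \<and> b \<in> {0..n} \<and> c \<in> {0..n} \<and> d \<in> {0..n} \<and>
      connected_in E a c \<and> connected_in E b d \<and> \<not> connected_in E a b \<and> a < b \<longrightarrow> c < d"
    using pf unfolding priority_forest_def by blast
  have "p = c - 1"
  proof (rule ccontr)
    assume "p \<noteq> c - 1"
    with \<open>p < c\<close> have "p < c - 1" by arith
    then have "\<not> connected_in E p (c - 1)"
      using parentless_not_connected[OF incr] below_c_parentless \<open>p < c\<close> by simp
    moreover have "connected_in E p c" "connected_in E (c - 1) (c - 1)"
      using pc by (auto simp: connected_in_def)
    moreover have "p \<in> {0..n}" "c - 1 \<in> {0..n}" "c \<in> {0..n}"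
      using \<open>p < c - 1\<close> \<open>c \<le> n\<close> by auto
    ultimately have "c < c - 1"
      using priority[rule_format, of p "c - 1" c "c - 1"] \<open>p < c - 1\<close> by blast
    then show False by simp
  qed
  then have "(p, Suc p) \<in> small_ascents E" using pc \<open>p < c\<close> by (simp add: small_ascents_def)
  then show ?thesis by blast
qed

lemma connected_in_chainD:
  assumes Q: "Q \<subseteq> {(k, Suc k) | k. True}" and "connected_in Q a b"
    and "min a b \<le> k" "k < max a b"
  shows "(k, Suc k) \<in> Q"
  using assms(2-4) unfolding connected_in_def
proof (induction arbitrary: k rule: rtrancl_induct)
  case (step y z)
  from \<open>(y, z) \<in> Q \<union> Q\<inverse>\<close> Q consider "z = Suc y" "(y, z) \<in> Q" | "y = Suc z" "(z, y) \<in> Q"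
    by blast
  then show ?case
  proof cases
    case 1
    then have "k = y \<or> min a y \<le> k \<and> k < max a y" using step.prems by auto
    then show ?thesis using 1 step.IH by blast
  next
    case 2
    then have "k = z \<or> min a y \<le> k \<and> k < max a y" using step.prems by auto
    then show ?thesis using 2 step.IH by blast
  qed
qed simp

lemma connected_in_chainI:
  assumes "\<And>k. a \<le> k \<Longrightarrow> k < b \<Longrightarrow> (k, Suc k) \<in> Q" and "a \<le> b"
  shows "connected_in Q a b"
  using assms unfolding connected_in_def
proof (induction b)
  case (Suc b)
  then show ?case
    by (cases "a = Suc b") (auto intro: rtrancl_into_rtrancl simp: less_Suc_eq)
qed simp

lemma priority_forest_chain:
  assumes Q: "Q \<subseteq> {(k, Suc k) | k. k < n}"
  shows "priority_forest n Q"
proof -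
  have chain: "Q \<subseteq> {(k, Suc k) | k. True}" using Q by blast
  have "c < d" if ac: "connected_in Q a c" and bd: "connected_in Q b d"
    and "\<not> connected_in Q a b" "a < b" for a b c d
  proof -
    obtain k where k: "a \<le> k" "k < b" "(k, Suc k) \<notin> Q"
      using connected_in_chainI[of a b Q] \<open>\<not> connected_in Q a b\<close> \<open>a < b\<close> by force
    have "c \<le> k" using connected_in_chainD[OF chain ac, of k] k by (cases "c \<le> k") auto
    moreover have "k < d" using connected_in_chainD[OF chain bd, of k] k by (cases "k < d") auto
    ultimately show ?thesis by simp
  qed
  moreover have "Q \<subseteq> {0..n} \<times> {0..n}" using Q by auto
  ultimately show ?thesis using Q unfolding priority_forest_def by blast
qed

lemma priority_forest_subset_small_ascents:
  assumes "priority_forest n E" "Q \<subseteq> small_ascents E"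
  shows "priority_forest n Q"
  by (rule priority_forest_chain)
    (use assms in \<open>fastforce simp: priority_forest_def small_ascents_def\<close>)

lemma sum_Pow_alternating_powers:
  fixes X :: "'a::comm_ring_1"
  assumes A: "finite A" and "card A \<le> m"
  shows "(\<Sum>Q\<in>Pow A. (-1) ^ card Q * X ^ (m - card Q)) = X ^ (m - card A) * (X - 1) ^ card A"
proof -
  have "(\<Sum>Q\<in>Pow A. (-1) ^ card Q * X ^ (m - card Q))
      = (\<Sum>Q\<in>Pow A. X ^ (m - card A) * ((-1) ^ card Q * (\<Prod>x\<in>Q. 1) * (\<Prod>x\<in>A - Q. X)))"
  proof (rule sum.cong)
    fix Q assume "Q \<in> Pow A"
    then have "m - card Q = (m - card A) + card (A - Q)"
      using A \<open>card A \<le> m\<close> card_mono[OF A, of Q] by (auto simp: card_Diff_subset finite_subset)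
    then show "(-1) ^ card Q * X ^ (m - card Q)
        = X ^ (m - card A) * ((-1) ^ card Q * (\<Prod>x\<in>Q. 1) * (\<Prod>x\<in>A - Q. X))"
      by (simp add: power_add mult.left_commute)
  qed simp
  also have "\<dots> = X ^ (m - card A) * (\<Prod>x\<in>A. X - 1)"
    by (simp only: prod_diff_conv_sum[OF A] sum_distrib_left)
  finally show ?thesis by simp
qed

lemma sum_Pow_alternating_eq_0:
  assumes "finite A" "A \<noteq> {}"
  shows "(\<Sum>Q\<in>Pow A. (-1::'a::comm_ring_1) ^ card Q) = 0"
proof -
  have "card A \<noteq> 0" using assms by simp
  then show ?thesis
    using sum_Pow_alternating_powers[OF assms(1) order.refl, of "1::'a"] by (simp add: power_0_left)
qed

lemma mobius_empty_Boolean_atoms: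
  assumes fin: "\<And>x. x \<in> F \<Longrightarrow> finite x"
    and down: "\<And>x y. x \<in> F \<Longrightarrow> y \<subseteq> x \<inter> A \<Longrightarrow> y \<in> F"
    and atom: "\<And>x. x \<in> F \<Longrightarrow> x \<noteq> {} \<Longrightarrow> x \<inter> A \<noteq> {}"
    and "x \<in> F"
  shows "mobius F {} x = (if x \<subseteq> A then (-1) ^ card x else 0)"
  using \<open>x \<in> F\<close>
proof (induction "card x" arbitrary: x rule: less_induct)
  case less
  let ?f = "\<lambda>z. if z \<subseteq> A then (-1::int) ^ card z else 0"
  show ?case
  proof (cases "x = {}")
    case True
    then show ?thesis by (simp add: mobius.simps)
  next
    case False
    have "finite x" using fin less.prems .
    define B where "B = x \<inter> A"
    have "finite B" "B \<noteq> {}" using \<open>finite x\<close> atom[OF less.prems False] by (auto simp: B_def)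
    let ?S = "{z \<in> F. {} \<subseteq> z \<and> z \<subset> x}"
    have "mobius F {} x = - (\<Sum>z\<in>?S. mobius F {} z)"
      using False \<open>finite x\<close> by (subst mobius.simps) simp
    also have "(\<Sum>z\<in>?S. mobius F {} z) = (\<Sum>z\<in>?S. ?f z)"
      using less.hyps psubset_card_mono[OF \<open>finite x\<close>] by (intro sum.cong) auto
    also have "\<dots> = (\<Sum>z\<in>Pow B - {x}. ?f z)"
    proof (rule sum.mono_neutral_right)
      show "finite ?S" using \<open>finite x\<close> by (auto intro: finite_subset[of _ "Pow x"])
      show "Pow B - {x} \<subseteq> ?S" using down[OF less.prems] by (auto simp: B_def)
    qed (auto simp: B_def)
    also have "\<dots> = (\<Sum>z\<in>Pow B - {x}. (-1) ^ card z)"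
      by (rule sum.cong) (auto simp: B_def)
    also have "\<dots> = (\<Sum>z\<in>Pow B. (-1) ^ card z) - ?f x"
    proof (cases "x \<subseteq> A")
      case True
      then have "x \<in> Pow B" by (simp add: B_def)
      then show ?thesis using True \<open>finite B\<close> by (simp add: sum_diff1)
    qed (simp add: B_def)
    finally show ?thesis
      using sum_Pow_alternating_eq_0[OF \<open>finite B\<close> \<open>B \<noteq> {}\<close>] by simp
  qed
qed

lemma mobius_ideal_PF:
  assumes pf: "priority_forest n E" and "x \<in> ideal_PF n E"
  shows "mobius (ideal_PF n E) {} x = (if x \<subseteq> small_ascents E then (-1) ^ card x else 0)"
proof (rule mobius_empty_Boolean_atoms)
  show "finite x" if "x \<in> ideal_PF n E" for x
    using that finite_if_priority_forest by (auto simp: ideal_PF_def)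
  show "y \<in> ideal_PF n E" if "x \<in> ideal_PF n E" "y \<subseteq> x \<inter> small_ascents E" for x y
    using that priority_forest_subset_small_ascents[OF pf] by (auto simp: ideal_PF_def)
  show "x \<inter> small_ascents E \<noteq> {}" if "x \<in> ideal_PF n E" "x \<noteq> {}" for x
    using that priority_forest_has_small_ascent by (fastforce simp: ideal_PF_def small_ascents_def)
qed fact

lemma char_poly_PF_eq:
  assumes pf: "priority_forest n E"
  shows "char_poly_PF n E = [:0, 1:] ^ (card E - sasc n E) * [:-1, 1:] ^ sasc n E"
proof -
  let ?F = "ideal_PF n E" and ?A = "small_ascents E"
  have "finite E" using pf by (rule finite_if_priority_forest)
  have "?A \<subseteq> E" by (auto simp: small_ascents_def)
  then have "finite ?A" "card ?A \<le> card E" using \<open>finite E\<close> by (auto intro: finite_subset card_mono)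
  have card_A: "card ?A = sasc n E"
    using pf by (intro card_small_ascents) (simp add: priority_forest_def)
  have Pow_A: "Pow ?A \<subseteq> ?F"
    using priority_forest_subset_small_ascents[OF pf] \<open>?A \<subseteq> E\<close> by (auto simp: ideal_PF_def)
  have smult_sign: "smult ((-1) ^ k) p = (-1) ^ k * p" for k and p :: "int poly"
    by (induction k) simp_all
  have "char_poly_PF n E = (\<Sum>Q\<in>?F. smult (mobius ?F {} Q) (monom 1 (card E - card Q)))"
    unfolding char_poly_PF_def ..
  also have "\<dots> = (\<Sum>Q\<in>Pow ?A. smult (mobius ?F {} Q) (monom 1 (card E - card Q)))"
  proof (rule sum.mono_neutral_right)
    show "finite ?F" using \<open>finite E\<close> by (auto intro: finite_subset[of _ "Pow E"] simp: ideal_PF_def)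
  qed (use Pow_A mobius_ideal_PF[OF pf] in auto)
  also have "\<dots> = (\<Sum>Q\<in>Pow ?A. (-1) ^ card Q * [:0, 1:] ^ (card E - card Q))"
    using Pow_A mobius_ideal_PF[OF pf] by (intro sum.cong) (auto simp: monom_altdef smult_sign)
  also have "\<dots> = [:0, 1:] ^ (card E - card ?A) * ([:0, 1:] - 1) ^ card ?A"
    by (rule sum_Pow_alternating_powers) fact+
  finally show ?thesis by (simp add: card_A one_pCons)
qed

lemma finite_occ: "finite (occ \<pi> k)"
  by (induction k) auto

lemma occ_eq_spot_image: "occ \<pi> k = spot \<pi> ` {1..k}"
proof (induction k)
  case (Suc k)
  have "{1..Suc k} = insert (Suc k) {1..k}" by auto
  moreover have "spot \<pi> (Suc k) = (LEAST s. \<pi> (Suc k) \<le> s \<and> s \<notin> occ \<pi> k)"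
    by (simp add: spot_def)
  ultimately show ?case using Suc by (simp only: occ.simps image_insert)
qed simp

lemma spot_free: "\<pi> i \<le> spot \<pi> i \<and> spot \<pi> i \<notin> occ \<pi> (i - 1)"
proof -
  have "finite (occ \<pi> (i - 1) \<union> {..<\<pi> i})" by (simp add: finite_occ)
  then obtain s where "s \<notin> occ \<pi> (i - 1) \<union> {..<\<pi> i}"
    using ex_new_if_finite[OF infinite_UNIV_nat] by blast
  then have "\<pi> i \<le> s \<and> s \<notin> occ \<pi> (i - 1)" by auto
  then show ?thesis unfolding spot_def by (rule LeastI)
qed

lemma inj_on_spot: "inj_on (spot \<pi>) {1..m}"
proof -
  have "spot \<pi> i \<noteq> spot \<pi> j" if "1 \<le> i" "i < j" for i j
  proof -
    have "spot \<pi> i \<in> occ \<pi> (j - 1)"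
      unfolding occ_eq_spot_image using that by (intro imageI) auto
    then show ?thesis using spot_free[of \<pi> j] by auto
  qed
  then show ?thesis by (metis atLeastAtMost_iff inj_onI linorder_neqE_nat)
qed

lemma birds_eye_spot: "j \<in> {1..m} \<Longrightarrow> birds_eye m \<pi> (spot \<pi> j) = j"
  unfolding birds_eye_def using inj_onD[OF inj_on_spot] by blast

lemma pf_forest_eq_image: "pf_forest m \<pi> = (\<lambda>j. (\<pi> j - 1, spot \<pi> j)) ` {1..m}"
  unfolding pf_forest_def by (auto simp: birds_eye_spot)

lemma lucky_eq_sasc:
  assumes pf: "parking_function m n \<pi>"
  shows "lucky m \<pi> = sasc n (pf_forest m \<pi>)"
proof -
  let ?L = "{j \<in> {1..m}. spot \<pi> j = \<pi> j}"
  have lucky_spots: "{i \<in> {1..n}. (i - 1, i) \<in> pf_forest m \<pi>} = spot \<pi> ` ?L"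
  proof (intro equalityI subsetI)
    fix i assume "i \<in> {i \<in> {1..n}. (i - 1, i) \<in> pf_forest m \<pi>}"
    then obtain j where "j \<in> {1..m}" "i - 1 = \<pi> j - 1" "i = spot \<pi> j" "1 \<le> i"
      by (auto simp: pf_forest_eq_image)
    moreover have "1 \<le> \<pi> j" using pf \<open>j \<in> {1..m}\<close> by (simp add: parking_function_def)
    ultimately show "i \<in> spot \<pi> ` ?L" by force
  next
    fix i assume "i \<in> spot \<pi> ` ?L"
    then show "i \<in> {i \<in> {1..n}. (i - 1, i) \<in> pf_forest m \<pi>}"
      using pf by (force simp: pf_forest_eq_image parking_function_def)
  qed
  have "inj_on (spot \<pi>) ?L" by (rule inj_on_subset[OF inj_on_spot]) auto
  then show ?thesis
    unfolding sasc_def lucky_def lucky_spots by (rule card_image[symmetric])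
qed

theorem theorem5p15:
  fixes n m :: nat and E :: "(nat \<times> nat) set"
  assumes "priority_forest n E" and "card E = m"
  shows "char_poly_PF n E = [:0, 1:] ^ (m - sasc n E) * [:-1, 1:] ^ sasc n E
         \<and> (\<forall>\<pi>. parking_function m n \<pi> \<and> pf_forest m \<pi> = E \<longrightarrow>
              char_poly_PF n E = [:0, 1:] ^ (m - lucky m \<pi>) * [:-1, 1:] ^ lucky m \<pi>)"
  using char_poly_PF_eq[OF assms(1)] lucky_eq_sasc assms(2) by auto

end
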